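(* There is a group $G$ together with a paradoxical action of $G$ on $\mathbb{R}$ such that for every $G$-selector $A$ (i.e. every $G$-Vitali set), the set $\mathbb{R}_A$ is not Lebesgue measurable.
   Context: Given a group $G$ acting on $\mathbb{R}$, a set $S\subseteq\mathbb{R}$ is a $G$-selector if for every $x\in\mathbb{R}$ there are $v\in S$ and $g\in G$ with $g\cdot x=v$, and for distinct $x,y\in S$ there is no $g\in G$ with $g\cdot x=y$. The action is paradoxical if every $G$-selector is not Lebesgue measurable; in that case selectors are called $G$-Vitali sets. For $A\subseteq\mathbb{R}$, $\mathbb{R}_A$ is the set of all reals Turing equivalent to some element of $A$. *)

theory Defs
  imports "HOL-Analysis.Analysis" "HOL-Algebra.Group_Action" "HOL-Library.Nat_Bijection"
begin

definition is_selector :: "('g, 'm) monoid_scheme \<Rightarrow> ('g \<Rightarrow> real \<Rightarrow> real) \<Rightarrow> real set \<Rightarrow> bool" where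
  "is_selector G \<phi> S \<longleftrightarrow>
     (\<forall>x::real. \<exists>v\<in>S. \<exists>g\<in>carrier G. \<phi> g x = v) \<and>
     (\<forall>x\<in>S. \<forall>y\<in>S. x \<noteq> y \<longrightarrow> \<not> (\<exists>g\<in>carrier G. \<phi> g x = y))"

definition paradoxical_action :: "('g, 'm) monoid_scheme \<Rightarrow> ('g \<Rightarrow> real \<Rightarrow> real) \<Rightarrow> bool" where
  "paradoxical_action G \<phi> \<longleftrightarrow> (\<forall>S. is_selector G \<phi> S \<longrightarrow> S \<notin> sets lebesgue)"

datatype recf = Zero | Succ | Proj nat | Orc | Cn recf "recf list" | Pr recf recf | Mn recf

inductive eval_rec :: "(nat \<Rightarrow> nat) \<Rightarrow> recf \<Rightarrow> nat list \<Rightarrow> nat \<Rightarrow> bool" for orc where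
  zero: "eval_rec orc Zero xs 0"
| succ: "eval_rec orc Succ (x # xs) (Suc x)"
| proj: "i < length xs \<Longrightarrow> eval_rec orc (Proj i) xs (xs ! i)"
| orc:  "eval_rec orc Orc (x # xs) (orc x)"
| cn:   "list_all2 (\<lambda>g y. eval_rec orc g xs y) gs ys \<Longrightarrow> eval_rec orc f ys z \<Longrightarrow> eval_rec orc (Cn f gs) xs z"
| pr0:  "eval_rec orc f xs y \<Longrightarrow> eval_rec orc (Pr f g) (0 # xs) y"
| prS:  "eval_rec orc (Pr f g) (n # xs) y \<Longrightarrow> eval_rec orc g (n # y # xs) z \<Longrightarrow> eval_rec orc (Pr f g) (Suc n # xs) z"
| mn:   "eval_rec orc f (n # xs) 0 \<Longrightarrow> (\<forall>m<n. \<exists>k. eval_rec orc f (m # xs) (Suc k)) \<Longrightarrow> eval_rec orc (Mn f) xs n"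

definition turing_le :: "(nat \<Rightarrow> nat) \<Rightarrow> (nat \<Rightarrow> nat) \<Rightarrow> bool" where
  "turing_le f g \<longleftrightarrow> (\<exists>p. \<forall>n. eval_rec g p [n] (f n))"

text \<open>Coding of a real by its Dedekind cut, with rationals enumerated computably:
  n = prod_encode (a,b) codes the rational int_decode a / (b+1).\<close>
definition real_code :: "real \<Rightarrow> nat \<Rightarrow> nat" where
  "real_code x n = (case prod_decode n of (a, b) \<Rightarrow>
      if real_of_int (int_decode a) / real (Suc b) < x then 1 else 0)"

definition turing_equiv_real :: "real \<Rightarrow> real \<Rightarrow> bool" where
  "turing_equiv_real x y \<longleftrightarrow> turing_le (real_code x) (real_code y) \<and> turing_le (real_code y) (real_code x)"

definition turing_closure :: "real set \<Rightarrow> real set" where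
  "turing_closure A = {x. \<exists>a\<in>A. turing_equiv_real x a}"

end

theory Submission
  imports Defs
begin

(* Turing degrees are countable: there are only countably many oracle programs, each computes at
   most one function, and a real is determined by its Dedekind cut. By a transfinite recursion of
   length continuum, pick for every uncountable closed set P points q, p, p' of P such that the
   degrees of p and p' are disjoint from each other and from all degrees picked at other stages,
   and q lies in none of them. Let the union of the degrees of p and p' form one class, all other
   points being singletons; the permutations moving every point inside its class form a group whose
   orbits are these classes. A selector A contains every q and exactly one point of each glued
   class, so R_A, which contains A, cannot contain both p and p'. Hence A and R_A meet every
   uncountable closed set without containing it, i.e. they are Bernstein sets, which are not
   Lebesgue measurable. *)

unbundle cardinal_syntax

section \<open>Turing degrees are countable\<close>

inductive_cases ZeroE: "eval_rec g Zero xs y"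
inductive_cases SuccE: "eval_rec g Succ xs y"
inductive_cases ProjE: "eval_rec g (Proj i) xs y"
inductive_cases OrcE: "eval_rec g Orc xs y"
inductive_cases CnE: "eval_rec g (Cn f fs) xs y"
inductive_cases Pr0E: "eval_rec g (Pr f h) (0 # xs) y"
inductive_cases PrSE: "eval_rec g (Pr f h) (Suc n # xs) y"
inductive_cases MnE: "eval_rec g (Mn f) xs y"

lemma eval_rec_deterministic: "eval_rec g p xs y \<Longrightarrow> eval_rec g p xs y' \<Longrightarrow> y = y'"
proof (induction arbitrary: y' rule: eval_rec.induct)
  case zero then show ?case by (blast elim: ZeroE)
next
  case succ then show ?case by (blast elim: SuccE)
next
  case proj then show ?case by (blast elim: ProjE)
next
  case orc then show ?case by (blast elim: OrcE)
next
  case (cn xs fs ys f z)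
  from cn.prems obtain ys' where args: "list_all2 (\<lambda>h y. eval_rec g h xs y) fs ys'"
    and "eval_rec g f ys' y'"
    by (rule CnE)
  have "ys = ys'" using cn.IH(1) args
  proof (induction fs arbitrary: ys ys')
    case Nil then show ?case by simp
  next
    case Cons then show ?case by (cases ys; cases ys') auto
  qed
  with cn.IH(2) \<open>eval_rec g f ys' y'\<close> show ?case by blast
next
  case pr0 then show ?case by (blast elim: Pr0E)
next
  case prS then show ?case by (blast elim: PrSE)
next
  case (mn f n xs)
  from mn.prems have root: "eval_rec g f (y' # xs) 0"
    and below: "\<forall>m<y'. \<exists>k. eval_rec g f (m # xs) (Suc k)"
    by (auto elim: MnE)
  show ?case
  proof (rule linorder_cases)
    assume "n < y'"
    then show ?thesis using below mn.IH(1) by (metis Zero_not_Suc)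
  next
    assume "y' < n"
    then show ?thesis using root mn.IH(2) by (metis Zero_not_Suc)
  qed
qed

instance recf :: countable by countable_datatype

lemma countable_turing_reducible: "countable {f. turing_le f g}"
proof -
  define computed where "computed p = (THE f. \<forall>n. eval_rec g p [n] (f n))" for p
  have "computed p = f" if "\<forall>n. eval_rec g p [n] (f n)" for p f
    unfolding computed_def using that eval_rec_deterministic by (blast intro: the_equality ext)
  then have "{f. turing_le f g} \<subseteq> range computed"
    unfolding turing_le_def by blast
  then show ?thesis by (rule countable_subset) simp
qed

lemma turing_le_refl: "turing_le f f"
proof -
  have "eval_rec f (Cn Orc [Proj 0]) [n] (f n)" for n
  proof (rule eval_rec.cn[where ys = "[n]"])
    show "list_all2 (\<lambda>h y. eval_rec f h [n] y) [Proj 0] [n]"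
      using eval_rec.proj[of 0 "[n]" f] by simp
  qed (rule eval_rec.orc)
  then show ?thesis unfolding turing_le_def by blast
qed

lemma turing_equiv_real_refl: "turing_equiv_real x x"
  by (simp add: turing_equiv_real_def turing_le_refl)

lemma turing_equiv_real_commute: "turing_equiv_real x y \<longleftrightarrow> turing_equiv_real y x"
  by (auto simp: turing_equiv_real_def)

lemma real_code_rat_cut:
  assumes "b > 0"
  shows "real_code x (prod_encode (int_encode a, nat b - 1)) = (if of_int a / of_int b < x then 1 else 0)"
proof -
  have "real (Suc (nat b - 1)) = of_int b" using assms by simp
  then show ?thesis unfolding real_code_def prod_encode_inverse int_encode_inverse by simp
qed

lemma inj_real_code: "inj real_code"
proof -
  have "real_code x \<noteq> real_code y" if "x < y" for x y
  proof -
    obtain r where "r \<in> \<rat>" "x < r" "r < y" using Rats_dense_in_real[OF \<open>x < y\<close>] by blast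
    moreover obtain a b where "b > 0" "r = of_int a / of_int b" using \<open>r \<in> \<rat>\<close> by (metis Rats_cases')
    ultimately show ?thesis using real_code_rat_cut[of b _ a] by (metis less_asym zero_neq_one)
  qed
  then show ?thesis by (metis injI linorder_neqE)
qed

lemma countable_turing_degree: "countable {x. turing_equiv_real x a}"
proof -
  have "real_code ` {x. turing_equiv_real x a} \<subseteq> {f. turing_le f (real_code a)}"
    by (auto simp: turing_equiv_real_def)
  then have "countable (real_code ` {x. turing_equiv_real x a})"
    using countable_turing_reducible countable_subset by blast
  then show ?thesis using inj_real_code by (simp add: countable_image_inj_eq inj_on_subset)
qed

section \<open>A transfinite construction below the continuum\<close>

lemma lesspoll_UNIV_iff_card_of:
  fixes X :: "'a set"
  shows "X \<prec> (UNIV :: 'a set) \<longleftrightarrow> |X| <o |UNIV :: 'a set|"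
proof -
  have "X \<lesssim> (UNIV :: 'a set)" by (rule subset_imp_lepoll) simp
  then have "X \<prec> (UNIV :: 'a set) \<longleftrightarrow> \<not> |X| =o |UNIV :: 'a set|"
    by (simp add: lesspoll_def eqpoll_iff_card_of_ordIso)
  moreover have "|X| \<le>o |UNIV :: 'a set|" by (rule card_of_mono1) simp
  ultimately show ?thesis by (metis ordLeq_iff_ordLess_or_ordIso not_ordLess_ordIso)
qed

lemma countable_lesspoll_UNIV:
  fixes X :: "'a set"
  assumes "uncountable (UNIV :: 'a set)" and "countable X"
  shows "X \<prec> (UNIV :: 'a set)"
proof -
  have "\<not> X \<approx> (UNIV :: 'a set)"
  proof
    assume "X \<approx> (UNIV :: 'a set)"
    then have "(UNIV :: 'a set) \<lesssim> X" by (simp add: eqpoll_imp_lepoll eqpoll_sym)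
    then show False using assms countable_lepoll by blast
  qed
  then show ?thesis by (simp add: lesspoll_def subset_imp_lepoll)
qed

lemma Un_lesspoll_UNIV:
  fixes X Y :: "'a set"
  assumes "infinite (UNIV :: 'a set)" and "X \<prec> (UNIV :: 'a set)" and "Y \<prec> (UNIV :: 'a set)"
  shows "X \<union> Y \<prec> (UNIV :: 'a set)"
  using assms card_of_Un_ordLess_infinite by (auto simp: lesspoll_UNIV_iff_card_of)

lemma UN_countable_lesspoll_UNIV:
  fixes I :: "'a set" and B :: "'a \<Rightarrow> 'a set"
  assumes unc: "uncountable (UNIV :: 'a set)" and I: "I \<prec> (UNIV :: 'a set)"
    and B: "\<And>i. i \<in> I \<Longrightarrow> countable (B i)"
  shows "(\<Union>i\<in>I. B i) \<prec> (UNIV :: 'a set)"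
proof (cases "finite I")
  case True
  then show ?thesis using unc B by (intro countable_lesspoll_UNIV) (auto intro: countable_finite)
next
  case False
  have "|B i| \<le>o |I|" if i: "i \<in> I" for i
  proof -
    obtain f :: "'a \<Rightarrow> nat" where "inj_on f (B i)"
      using B[OF i] by (auto simp: countable_def)
    then have "|B i| \<le>o |UNIV :: nat set|" using card_of_ordLeq by blast
    moreover have "|UNIV :: nat set| \<le>o |I|" using False by (simp add: infinite_iff_card_of_nat)
    ultimately show ?thesis by (rule ordLeq_transitive)
  qed
  then have "|\<Union>i\<in>I. B i| \<le>o |I|"
    using card_of_UNION_ordLeq_infinite[OF False] card_of_refl by (metis ordIso_iff_ordLeq)
  then show ?thesis using I by (auto simp: lesspoll_UNIV_iff_card_of intro: ordLeq_ordLess_trans)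
qed

lemma not_subset_lesspoll: "A \<lesssim> S \<Longrightarrow> X \<prec> A \<Longrightarrow> \<not> S \<subseteq> X"
  by (meson lepoll_trans lesspoll_not_refl lesspoll_trans1 subset_imp_lepoll)

lemma transfinite_choice_avoiding_lesspoll:
  fixes P :: "'a \<Rightarrow> 'a set \<Rightarrow> 'b \<Rightarrow> bool" and B :: "'b \<Rightarrow> 'a set"
  assumes unc: "uncountable (UNIV :: 'a set)" and B: "\<And>t. countable (B t)"
    and P: "\<And>i U. U \<prec> (UNIV :: 'a set) \<Longrightarrow> \<exists>t. P i U t"
  obtains less :: "'a \<Rightarrow> 'a \<Rightarrow> bool" and f :: "'a \<Rightarrow> 'b"
  where "\<And>i j. i \<noteq> j \<Longrightarrow> less i j \<or> less j i"
    and "\<And>i. P i (\<Union>j\<in>{j. less j i}. B (f j)) (f i)"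
proof -
  define r where "r = |UNIV :: 'a set|"
  have wo: "Well_order r" unfolding r_def by (rule card_of_Well_order)
  have field: "Field r = UNIV" unfolding r_def by (rule Field_card_of)
  have initial: "underS r i \<prec> (UNIV :: 'a set)" for i
    using card_of_underS[of r i] unfolding r_def
    by (simp add: lesspoll_UNIV_iff_card_of card_of_card_order_on Field_card_of)
  define used where "used h i = (\<Union>j\<in>underS r i. B (h j))" for h :: "'a \<Rightarrow> 'b" and i
  have used_small: "used h i \<prec> (UNIV :: 'a set)" for h i
    unfolding used_def using UN_countable_lesspoll_UNIV[OF unc initial B] .
  define f where "f = wfrec (r - Id) (\<lambda>h i. SOME t. P i (used h i) t)"
  have wf: "wf (r - Id)" using wo by (simp add: wo_rel.WF wo_rel_def)
  have "f i = (SOME t. P i (used f i) t)" for i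
  proof -
    have "f i = (SOME t. P i (used (cut f (r - Id) i) i) t)"
      unfolding f_def by (subst wfrec[OF wf]) simp
    also have "used (cut f (r - Id) i) i = used f i"
      unfolding used_def by (intro SUP_cong refl) (auto simp: underS_def cut_apply)
    finally show ?thesis .
  qed
  then have "P i (used f i) (f i)" for i using someI_ex[OF P[OF used_small]] by metis
  moreover have "j \<in> underS r i \<or> i \<in> underS r j" if "i \<noteq> j" for i j
    using wo field that
    unfolding well_order_on_def linear_order_on_def total_on_def underS_def by auto
  ultimately show thesis using that[of "\<lambda>j i. j \<in> underS r i" f] unfolding used_def by auto
qed

lemma points_avoiding_lesspoll:
  fixes R :: "'a \<Rightarrow> 'a \<Rightarrow> bool"
  assumes unc: "uncountable (UNIV :: 'a set)"
    and right: "\<And>a. countable {x. R a x}" and left: "\<And>a. countable {x. R x a}"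
    and large: "(UNIV :: 'a set) \<lesssim> T" and U: "U \<prec> (UNIV :: 'a set)"
  obtains q a b where "q \<in> T" and "a \<in> T" and "b \<in> T"
    and "{x. R a x} \<inter> U = {}" and "{x. R b x} \<inter> (U \<union> {x. R a x}) = {}"
    and "q \<notin> U \<union> {x. R a x} \<union> {x. R b x}"
proof -
  have inf: "infinite (UNIV :: 'a set)" using unc countable_finite by blast
  have avoid: "\<exists>x\<in>T. x \<notin> X" if "X \<prec> (UNIV :: 'a set)" for X
    using not_subset_lesspoll[OF large that] by blast
  have preimage: "(\<Union>u\<in>V. {x. R x u}) \<prec> (UNIV :: 'a set)" if "V \<prec> (UNIV :: 'a set)" for V
    using UN_countable_lesspoll_UNIV[OF unc that left] .
  have image: "{x. R a x} \<prec> (UNIV :: 'a set)" for a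
    using countable_lesspoll_UNIV[OF unc right] .
  obtain a where a: "a \<in> T" "a \<notin> (\<Union>u\<in>U. {x. R x u})"
    using avoid[OF preimage[OF U]] by blast
  have Ua: "U \<union> {x. R a x} \<prec> (UNIV :: 'a set)" using Un_lesspoll_UNIV[OF inf U image] .
  obtain b where b: "b \<in> T" "b \<notin> (\<Union>u\<in>U \<union> {x. R a x}. {x. R x u})"
    using avoid[OF preimage[OF Ua]] by blast
  obtain q where "q \<in> T" "q \<notin> U \<union> {x. R a x} \<union> {x. R b x}"
    using avoid[OF Un_lesspoll_UNIV[OF inf Ua image]] by blast
  with a b show thesis by (intro that) auto
qed

lemma points_with_disjoint_sections:
  fixes R :: "'a \<Rightarrow> 'a \<Rightarrow> bool" and \<tau> :: "'a \<Rightarrow> 'a set"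
  assumes unc: "uncountable (UNIV :: 'a set)"
    and right: "\<And>a. countable {x. R a x}" and left: "\<And>a. countable {x. R x a}"
    and large: "\<And>i. (UNIV :: 'a set) \<lesssim> \<tau> i"
  obtains q p p' :: "'a \<Rightarrow> 'a"
  where "\<And>i. q i \<in> \<tau> i" and "\<And>i. p i \<in> \<tau> i" and "\<And>i. p' i \<in> \<tau> i"
    and "\<And>i. {x. R (p i) x} \<inter> {x. R (p' i) x} = {}"
    and "\<And>i j. i \<noteq> j \<Longrightarrow>
           ({x. R (p i) x} \<union> {x. R (p' i) x}) \<inter> ({x. R (p j) x} \<union> {x. R (p' j) x}) = {}"
    and "\<And>i j. q i \<notin> {x. R (p j) x} \<union> {x. R (p' j) x}"
proof -
  define N where "N a = {x. R a x}" for a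
  define good where "good i U t \<longleftrightarrow> (case t of (q, a, b) \<Rightarrow>
      q \<in> \<tau> i \<and> a \<in> \<tau> i \<and> b \<in> \<tau> i \<and>
      N a \<inter> U = {} \<and> N b \<inter> (U \<union> N a) = {} \<and> q \<notin> U \<union> N a \<union> N b)" for i U t
  define blk where "blk t = (case t of (q, a, b) \<Rightarrow> {q} \<union> N a \<union> N b)" for t :: "'a \<times> 'a \<times> 'a"
  have ex_good: "\<exists>t. good i U t" if U: "U \<prec> (UNIV :: 'a set)" for i U
  proof -
    obtain q a b where "q \<in> \<tau> i" "a \<in> \<tau> i" "b \<in> \<tau> i"
      and "{x. R a x} \<inter> U = {}" "{x. R b x} \<inter> (U \<union> {x. R a x}) = {}"
      and "q \<notin> U \<union> {x. R a x} \<union> {x. R b x}"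
      by (rule points_avoiding_lesspoll[OF unc right left large U])
    then have "good i U (q, a, b)" by (simp add: good_def N_def)
    then show ?thesis ..
  qed
  have countable_blk: "countable (blk t)" for t
    using right by (cases t) (auto simp: blk_def N_def)
  obtain less f where total: "\<And>i j. i \<noteq> j \<Longrightarrow> less i j \<or> less j i"
    and f: "\<And>i. good i (\<Union>j\<in>{j. less j i}. blk (f j)) (f i)"
    using transfinite_choice_avoiding_lesspoll[of blk good, OF unc countable_blk ex_good] by metis
  define q where "q i = fst (f i)" for i
  define p where "p i = fst (snd (f i))" for i
  define p' where "p' i = snd (snd (f i))" for i
  have fi: "f i = (q i, p i, p' i)" for i by (simp add: q_def p_def p'_def)
  have in_\<tau>: "q i \<in> \<tau> i" "p i \<in> \<tau> i" "p' i \<in> \<tau> i"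
    and split: "N (p i) \<inter> N (p' i) = {}" and own: "q i \<notin> N (p i) \<union> N (p' i)" for i
    using f[of i] by (auto simp: good_def fi)
  have earlier: "(N (p i) \<union> N (p' i)) \<inter> (N (p j) \<union> N (p' j)) = {} \<and>
      q i \<notin> N (p j) \<union> N (p' j) \<and> q j \<notin> N (p i) \<union> N (p' i)" if "less j i" for i j
  proof -
    have "{q j} \<union> N (p j) \<union> N (p' j) \<subseteq> (\<Union>j\<in>{j. less j i}. blk (f j))"
      using that by (auto simp: blk_def fi)
    then show ?thesis using f[of i] by (auto simp: good_def fi)
  qed
  show thesis
  proof (rule that)
    show "q i \<in> \<tau> i" "p i \<in> \<tau> i" "p' i \<in> \<tau> i" for i by (fact in_\<tau>)+
    show "{x. R (p i) x} \<inter> {x. R (p' i) x} = {}" for i using split[of i] by (simp add: N_def)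
    show "({x. R (p i) x} \<union> {x. R (p' i) x}) \<inter> ({x. R (p j) x} \<union> {x. R (p' j) x}) = {}"
      if "i \<noteq> j" for i j
      using total[OF that] earlier[of i j] earlier[of j i] unfolding N_def by blast
    show "q i \<notin> {x. R (p j) x} \<union> {x. R (p' j) x}" for i j
      using own[of i] total[of i j] earlier[of i j] earlier[of j i] unfolding N_def
      by (cases "i = j") blast+
  qed
qed

lemma equivp_same_block:
  assumes "\<And>i j. i \<noteq> j \<Longrightarrow> K i \<inter> K j = {}"
  shows "equivp (\<lambda>x y. x = y \<or> (\<exists>i. x \<in> K i \<and> y \<in> K i))"
proof (rule equivpI)
  show "transp (\<lambda>x y. x = y \<or> (\<exists>i. x \<in> K i \<and> y \<in> K i))"
    using assms by (simp add: transp_def) (metis disjoint_iff)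
qed (auto intro!: reflpI sympI)

lemma equivp_transversals_meet_and_avoid:
  fixes R :: "'a \<Rightarrow> 'a \<Rightarrow> bool" and \<F> :: "'a set set"
  assumes unc: "uncountable (UNIV :: 'a set)"
    and right: "\<And>a. countable {x. R a x}" and left: "\<And>a. countable {x. R x a}"
    and few: "\<F> \<lesssim> (UNIV :: 'a set)" and large: "\<And>P. P \<in> \<F> \<Longrightarrow> (UNIV :: 'a set) \<lesssim> P"
  obtains E where "equivp E"
    and "\<And>S P. \<forall>x. \<exists>v\<in>S. E x v \<Longrightarrow> \<forall>x\<in>S. \<forall>y\<in>S. E x y \<longrightarrow> x = y \<Longrightarrow> P \<in> \<F> \<Longrightarrow>
           P \<inter> S \<noteq> {} \<and> \<not> P \<subseteq> {x. \<exists>a\<in>S. R x a}"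
proof -
  obtain g :: "'a \<Rightarrow> 'a set" where g: "\<F> \<subseteq> range g" using few by (auto simp: lepoll_iff)
  define \<tau> where "\<tau> i = (if g i \<in> \<F> then g i else UNIV)" for i
  have "(UNIV :: 'a set) \<lesssim> \<tau> i" for i using large by (simp add: \<tau>_def)
  then obtain q p p' where in_\<tau>: "\<And>i. q i \<in> \<tau> i" "\<And>i. p i \<in> \<tau> i" "\<And>i. p' i \<in> \<tau> i"
    and split: "\<And>i. {x. R (p i) x} \<inter> {x. R (p' i) x} = {}"
    and disjoint: "\<And>i j. i \<noteq> j \<Longrightarrow>
           ({x. R (p i) x} \<union> {x. R (p' i) x}) \<inter> ({x. R (p j) x} \<union> {x. R (p' j) x}) = {}"
    and outside: "\<And>i j. q i \<notin> {x. R (p j) x} \<union> {x. R (p' j) x}"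
    using points_with_disjoint_sections[OF unc right left] by metis
  define K where "K i = {x. R (p i) x} \<union> {x. R (p' i) x}" for i
  define E where "E x y \<longleftrightarrow> x = y \<or> (\<exists>i. x \<in> K i \<and> y \<in> K i)" for x y
  have "equivp E"
    unfolding E_def[abs_def] using disjoint by (intro equivp_same_block) (simp add: K_def)
  moreover have "P \<inter> S \<noteq> {} \<and> \<not> P \<subseteq> {x. \<exists>a\<in>S. R x a}"
    if cover: "\<forall>x. \<exists>v\<in>S. E x v" and unique: "\<forall>x\<in>S. \<forall>y\<in>S. E x y \<longrightarrow> x = y" and "P \<in> \<F>"
    for S P
  proof -
    obtain i where P: "\<tau> i = P" using g \<open>P \<in> \<F>\<close> by (force simp: \<tau>_def)
    obtain v where "v \<in> S" "E (q i) v" using cover by blast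
    then have "q i \<in> S" using outside[of i] by (auto simp: E_def K_def)
    moreover have "\<not> (p i \<in> {x. \<exists>a\<in>S. R x a} \<and> p' i \<in> {x. \<exists>a\<in>S. R x a})"
    proof
      assume "p i \<in> {x. \<exists>a\<in>S. R x a} \<and> p' i \<in> {x. \<exists>a\<in>S. R x a}"
      then obtain a a' where "a \<in> S" "R (p i) a" "a' \<in> S" "R (p' i) a'" by blast
      moreover from this have "E a a'" by (auto simp: E_def K_def)
      ultimately show False using unique split[of i] by blast
    qed
    ultimately show ?thesis using in_\<tau>[of i] P by blast
  qed
  ultimately show thesis by (rule that)
qed

section \<open>Permutations preserving the classes of an equivalence relation\<close>

definition class_perm_group :: "('a \<Rightarrow> 'a \<Rightarrow> bool) \<Rightarrow> ('a \<Rightarrow> 'a) monoid" where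
  "class_perm_group E = BijGroup UNIV \<lparr>carrier := {f \<in> Bij UNIV. \<forall>x. E x (f x)}\<rparr>"

lemma subgroup_class_perms:
  assumes "equivp E"
  shows "subgroup {f \<in> Bij UNIV. \<forall>x. E x (f x)} (BijGroup UNIV)"
proof (rule group.subgroupI[OF group_BijGroup])
  show "{f \<in> Bij UNIV. \<forall>x. E x (f x)} \<subseteq> carrier (BijGroup UNIV)"
    by (auto simp: BijGroup_def)
  show "{f \<in> Bij UNIV. \<forall>x. E x (f x)} \<noteq> {}"
    using assms id_Bij[of UNIV] by (auto simp: equivp_reflp)
next
  fix f assume f: "f \<in> {f \<in> Bij UNIV. \<forall>x. E x (f x)}"
  then have "bij f" by (simp add: Bij_def)
  have "E x (inv_into UNIV f x)" for x
    using f equivp_symp[OF assms] \<open>bij f\<close> by (metis (mono_tags) bij_inv_eq_iff mem_Collect_eq)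
  then show "inv\<^bsub>BijGroup UNIV\<^esub> f \<in> {f \<in> Bij UNIV. \<forall>x. E x (f x)}"
    using f by (simp add: inv_BijGroup restrict_inv_into_Bij)
next
  fix f g assume f: "f \<in> {f \<in> Bij UNIV. \<forall>x. E x (f x)}" and g: "g \<in> {f \<in> Bij UNIV. \<forall>x. E x (f x)}"
  then have "f \<otimes>\<^bsub>BijGroup UNIV\<^esub> g = compose UNIV f g" by (simp add: BijGroup_def)
  moreover have "E x (compose UNIV f g x)" for x
    using f g equivp_transp[OF assms] by (simp add: compose_def) blast
  ultimately show "f \<otimes>\<^bsub>BijGroup UNIV\<^esub> g \<in> {f \<in> Bij UNIV. \<forall>x. E x (f x)}"
    using f g by (simp add: compose_Bij)
qed

lemma group_class_perm_group: "equivp E \<Longrightarrow> group (class_perm_group E)"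
  unfolding class_perm_group_def
  by (rule subgroup.subgroup_is_group[OF subgroup_class_perms group_BijGroup])

lemma group_action_class_perm_group: "equivp E \<Longrightarrow> group_action (class_perm_group E) UNIV id"
  unfolding group_action_def class_perm_group_def
  by (rule group.canonical_inj_is_hom[OF group_BijGroup subgroup_class_perms])

lemma class_perm_group_orbit_iff:
  assumes "equivp E"
  shows "(\<exists>g\<in>carrier (class_perm_group E). g x = y) \<longleftrightarrow> E x y"
proof
  assume "\<exists>g\<in>carrier (class_perm_group E). g x = y"
  then show "E x y" by (auto simp: class_perm_group_def)
next
  assume "E x y"
  then have "E z (Transposition.transpose x y z)" for z
    using equivp_reflp[OF assms] equivp_symp[OF assms] by (simp add: Transposition.transpose_def)
  then have "Transposition.transpose x y \<in> carrier (class_perm_group E)"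
    by (simp add: class_perm_group_def Bij_def bij_transpose)
  moreover have "Transposition.transpose x y x = y" by simp
  ultimately show "\<exists>g\<in>carrier (class_perm_group E). g x = y" by blast
qed

lemma is_selector_class_perm_group_iff:
  assumes "equivp E"
  shows "is_selector (class_perm_group E) id S \<longleftrightarrow>
    (\<forall>x. \<exists>v\<in>S. E x v) \<and> (\<forall>x\<in>S. \<forall>y\<in>S. E x y \<longrightarrow> x = y)"
  unfolding is_selector_def id_apply class_perm_group_orbit_iff[OF assms] by blast

section \<open>Perfect sets and Bernstein sets\<close>

lemma uncountable_closed_lepoll:
  fixes P :: "'a::polish_space set"
  assumes "closed P" and "uncountable P"
  shows "(UNIV :: real set) \<lesssim> P"
proof -
  define S where "S = {x. \<forall>U. open U \<longrightarrow> x \<in> U \<longrightarrow> uncountable (P \<inter> U)}"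
  obtain \<B> :: "'a set set"
    where "countable \<B>" and basis: "\<And>U. open U \<Longrightarrow> \<exists>\<U>\<subseteq>\<B>. U = \<Union>\<U>"
    by (metis univ_second_countable)
  have "P - S \<subseteq> (\<Union>b\<in>{b \<in> \<B>. countable (P \<inter> b)}. P \<inter> b)"
  proof
    fix x assume x: "x \<in> P - S"
    then obtain U where "open U" "x \<in> U" "countable (P \<inter> U)" unfolding S_def by blast
    obtain \<U> where "\<U> \<subseteq> \<B>" "U = \<Union>\<U>" using basis[OF \<open>open U\<close>] by blast
    then obtain b where "b \<in> \<B>" "x \<in> b" "b \<subseteq> U" using \<open>x \<in> U\<close> by blast
    moreover have "countable (P \<inter> b)"
      using \<open>countable (P \<inter> U)\<close> by (rule countable_subset[rotated]) (use \<open>b \<subseteq> U\<close> in blast)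
    ultimately show "x \<in> (\<Union>b\<in>{b \<in> \<B>. countable (P \<inter> b)}. P \<inter> b)" using x by blast
  qed
  moreover have "countable (\<Union>b\<in>{b \<in> \<B>. countable (P \<inter> b)}. P \<inter> b)"
  proof (rule countable_UN)
    show "countable {b \<in> \<B>. countable (P \<inter> b)}"
      using \<open>countable \<B>\<close> by (rule countable_subset[rotated]) blast
  qed simp
  ultimately have countable_rest: "countable (P - S)" by (rule countable_subset)
  have "S \<subseteq> P"
  proof
    fix x assume "x \<in> S"
    then have "open (- P) \<longrightarrow> x \<in> - P \<longrightarrow> uncountable (P \<inter> - P)" unfolding S_def by blast
    then show "x \<in> P" using \<open>closed P\<close> by auto
  qed
  have "S \<noteq> {}" using countable_rest \<open>uncountable P\<close> by auto
  have "euclidean derived_set_of S = S"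
  proof (intro Set.set_eqI iffI)
    fix x assume "x \<in> euclidean derived_set_of S"
    then have limit: "\<exists>y\<in>S. y \<in> U" if "open U" "x \<in> U" for U
      using that unfolding derived_set_of_def by auto
    show "x \<in> S" unfolding S_def
    proof (intro CollectI allI impI)
      fix U assume "open U" "x \<in> U"
      then obtain y where "y \<in> S" "y \<in> U" using limit by blast
      then show "uncountable (P \<inter> U)" using \<open>open U\<close> unfolding S_def by blast
    qed
  next
    fix x assume "x \<in> S"
    have "\<exists>y\<in>S. y \<noteq> x \<and> y \<in> U" if "open U" "x \<in> U" for U
    proof -
      have "uncountable (P \<inter> U)" using \<open>x \<in> S\<close> that unfolding S_def by blast
      moreover have "countable ((P - S) \<union> {x})" using countable_rest by simp
      ultimately have "\<not> P \<inter> U \<subseteq> (P - S) \<union> {x}" by (metis countable_subset)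
      then show ?thesis by blast
    qed
    then show "x \<in> euclidean derived_set_of S" unfolding derived_set_of_def by auto
  qed
  then have "(UNIV :: real set) \<lesssim> S"
    using completely_metrizable_space_euclidean \<open>S \<noteq> {}\<close> by (intro lepoll_perfect_set) auto
  then show ?thesis using subset_imp_lepoll[OF \<open>S \<subseteq> P\<close>] by (rule lepoll_trans)
qed

lemma closed_sets_lepoll: "{P :: 'a::second_countable_topology set. closed P} \<lesssim> (UNIV :: real set)"
proof -
  obtain \<B> :: "'a set set"
    where "countable \<B>" and basis: "\<And>U. open U \<Longrightarrow> \<exists>\<U>\<subseteq>\<B>. U = \<Union>\<U>"
    by (metis univ_second_countable)
  have closed_eq: "P = - \<Union>{b \<in> \<B>. P \<inter> b = {}}" if "closed P" for P
  proof (intro Set.set_eqI iffI)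
    fix x assume "x \<in> P"
    then show "x \<in> - \<Union>{b \<in> \<B>. P \<inter> b = {}}" by blast
  next
    fix x assume x: "x \<in> - \<Union>{b \<in> \<B>. P \<inter> b = {}}"
    have "open (- P)" using \<open>closed P\<close> by (rule open_Compl)
    then obtain \<U> where "\<U> \<subseteq> \<B>" "- P = \<Union>\<U>" using basis by blast
    then show "x \<in> P" using x by blast
  qed
  have "inj_on (\<lambda>P. {b \<in> \<B>. P \<inter> b = {}}) {P. closed P}"
  proof (rule inj_onI)
    fix P Q assume "P \<in> {P. closed P}" "Q \<in> {P. closed P}"
      and "{b \<in> \<B>. P \<inter> b = {}} = {b \<in> \<B>. Q \<inter> b = {}}"
    then show "P = Q" using closed_eq[of P] closed_eq[of Q] by simp
  qed
  then have "{P :: 'a set. closed P} \<lesssim> Pow \<B>" unfolding lepoll_def by blast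
  also have "Pow \<B> \<lesssim> (UNIV :: nat set set)"
    using inj_on_image_Pow[OF inj_on_to_nat_on[OF \<open>countable \<B>\<close>]] unfolding lepoll_def by blast
  also have "(UNIV :: nat set set) \<approx> (UNIV :: real set)" by (rule nat_sets_eqpoll_reals)
  finally show ?thesis .
qed

lemma lebesgue_nonnull_contains_uncountable_closed:
  fixes M :: "'a::euclidean_space set"
  assumes M: "M \<in> sets lebesgue" and "M \<notin> null_sets lebesgue"
  shows "\<exists>T. closed T \<and> T \<subseteq> M \<and> uncountable T"
proof (rule ccontr)
  assume no_closed: "\<nexists>T. closed T \<and> T \<subseteq> M \<and> uncountable T"
  have "emeasure lebesgue M \<le> 0 + ennreal e" if e: "e > 0" for e
  proof -
    obtain T where "closed T" "T \<subseteq> M" "M - T \<in> lmeasurable"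
      and small: "emeasure lebesgue (M - T) < ennreal e"
      by (rule sets_lebesgue_inner_closed[OF M e])
    have "countable T" using no_closed \<open>closed T\<close> \<open>T \<subseteq> M\<close> by blast
    then have "T \<in> null_sets lebesgue"
      by (intro null_sets_completionI countable_imp_null_set_lborel)
    then have "emeasure lebesgue (M - T) = emeasure lebesgue M" using M by (rule emeasure_Diff_null_set)
    then show ?thesis using small by simp
  qed
  then have "emeasure lebesgue M \<le> 0" by (rule ennreal_le_epsilon)
  then show False using assms by (simp add: null_setsI)
qed

lemma not_lebesgue_measurable_between:
  fixes A X C :: "'a::euclidean_space set"
  assumes Bernstein: "\<And>P. closed P \<Longrightarrow> uncountable P \<Longrightarrow> P \<inter> A \<noteq> {} \<and> \<not> P \<subseteq> C"
    and "A \<subseteq> X" and "X \<subseteq> C"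
  shows "X \<notin> sets lebesgue"
proof
  assume X: "X \<in> sets lebesgue"
  have "X \<in> null_sets lebesgue"
  proof (rule ccontr)
    assume "X \<notin> null_sets lebesgue"
    then obtain T where "closed T" "T \<subseteq> X" "uncountable T"
      using lebesgue_nonnull_contains_uncountable_closed[OF X] by blast
    then show False using Bernstein[of T] \<open>X \<subseteq> C\<close> by blast
  qed
  moreover have "- X \<in> null_sets lebesgue"
  proof (rule ccontr)
    assume "- X \<notin> null_sets lebesgue"
    then obtain T where "closed T" "T \<subseteq> - X" "uncountable T"
      using lebesgue_nonnull_contains_uncountable_closed[of "- X"] X by (auto simp: Compl_in_sets_lebesgue)
    then show False using Bernstein[of T] \<open>A \<subseteq> X\<close> by blast
  qed
  ultimately have "X \<union> - X \<in> null_sets lebesgue" by (rule null_sets.Un)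
  then have "emeasure lebesgue (UNIV :: 'a set) = 0" by (simp add: null_setsD1)
  then show False by (simp add: emeasure_completion)
qed

theorem mainTheorem7:
  shows "\<exists>(G :: (real \<Rightarrow> real) monoid) (\<phi> :: (real \<Rightarrow> real) \<Rightarrow> real \<Rightarrow> real).
           group G \<and> group_action G UNIV \<phi> \<and> paradoxical_action G \<phi> \<and>
           (\<forall>A. is_selector G \<phi> A \<longrightarrow> turing_closure A \<notin> sets lebesgue)"
proof -
  define \<F> where "\<F> = {P :: real set. closed P \<and> uncountable P}"
  have few: "\<F> \<lesssim> (UNIV :: real set)"
    by (rule lepoll_trans[OF subset_imp_lepoll closed_sets_lepoll]) (auto simp: \<F>_def)
  have large: "(UNIV :: real set) \<lesssim> P" if "P \<in> \<F>" for P
    using that uncountable_closed_lepoll by (auto simp: \<F>_def)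
  have right: "countable {x. turing_equiv_real a x}" for a
    using countable_turing_degree[of a] by (simp add: turing_equiv_real_commute)
  obtain E where E: "equivp E" and transversal:
    "\<And>S P. \<forall>x. \<exists>v\<in>S. E x v \<Longrightarrow> \<forall>x\<in>S. \<forall>y\<in>S. E x y \<longrightarrow> x = y \<Longrightarrow> P \<in> \<F> \<Longrightarrow>
       P \<inter> S \<noteq> {} \<and> \<not> P \<subseteq> {x. \<exists>a\<in>S. turing_equiv_real x a}"
    using equivp_transversals_meet_and_avoid[OF uncountable_UNIV_real right countable_turing_degree few]
      large by blast
  define G where "G = class_perm_group E"
  have closure_superset: "A \<subseteq> turing_closure A" for A
    using turing_equiv_real_refl by (auto simp: turing_closure_def)
  have nonmeasurable: "X \<notin> sets lebesgue"
    if "is_selector G id A" and "A \<subseteq> X" and "X \<subseteq> turing_closure A" for A X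
  proof (rule not_lebesgue_measurable_between[OF _ that(2,3)])
    fix P :: "real set" assume "closed P" "uncountable P"
    then show "P \<inter> A \<noteq> {} \<and> \<not> P \<subseteq> turing_closure A"
      using transversal[of A P] that(1)
      by (simp add: G_def is_selector_class_perm_group_iff[OF E] \<F>_def turing_closure_def)
  qed
  show ?thesis
  proof (intro exI[of _ G] exI[of _ id] conjI allI impI)
    show "group G" unfolding G_def using E by (rule group_class_perm_group)
    show "group_action G UNIV id" unfolding G_def using E by (rule group_action_class_perm_group)
    show "paradoxical_action G id"
      unfolding paradoxical_action_def using nonmeasurable[OF _ order_refl closure_superset] by blast
    show "turing_closure A \<notin> sets lebesgue" if "is_selector G id A" for A
      using nonmeasurable[OF that closure_superset order_refl] .
  qed
qed

end
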